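(* Let $r,t\ge1$, $\varepsilon\ge 0$, let $\boldsymbol\Sigma\in\mathbb R^{r\times t}$ be a rectangular diagonal matrix with nonnegative diagonal entries and $\boldsymbol\Lambda\in\mathbb R^{t\times t}$ a diagonal matrix with nonnegative diagonal entries. Then the minimization problem $$\min_{\boldsymbol\Delta\in\mathbb C^{r\times t},\ \|\boldsymbol\Delta\|_2\le\varepsilon}\ \det\!\left[\mathbf I_r+(\boldsymbol\Sigma+\boldsymbol\Delta)\boldsymbol\Lambda(\boldsymbol\Sigma+\boldsymbol\Delta)^H\right]$$ has a minimizer $\boldsymbol\Delta$ that is a (rectangular) diagonal matrix.
   Context: $\|\cdot\|_2$ denotes the spectral norm (largest singular value). A rectangular $r\times t$ matrix is diagonal if all entries $(i,j)$ with $i\ne j$ vanish. *)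

theory Defs
  imports "Jordan_Normal_Form.Schur_Decomposition" "Jordan_Normal_Form.Determinant"
begin

definition vec_2norm :: "complex vec \<Rightarrow> real" where
  "vec_2norm x = sqrt (\<Sum>i<dim_vec x. (cmod (x $ i))\<^sup>2)"

definition spectral_norm :: "complex mat \<Rightarrow> real" where
  "spectral_norm A = Sup {vec_2norm (A *\<^sub>v x) | x. x \<in> carrier_vec (dim_col A) \<and> vec_2norm x \<le> 1}"

definition rect_diagonal :: "'a::zero mat \<Rightarrow> bool" where
  "rect_diagonal A \<longleftrightarrow> (\<forall>i<dim_row A. \<forall>j<dim_col A. i \<noteq> j \<longrightarrow> A $$ (i,j) = 0)"

definition cmat :: "real mat \<Rightarrow> complex mat" where
  "cmat A = map_mat complex_of_real A"

definition objective :: "nat \<Rightarrow> real mat \<Rightarrow> real mat \<Rightarrow> complex mat \<Rightarrow> complex" where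
  "objective r \<Sigma> \<Lambda> \<Delta> =
     det (1\<^sub>m r + (cmat \<Sigma> + \<Delta>) * cmat \<Lambda> * mat_adjoint (cmat \<Sigma> + \<Delta>))"

end

theory Submission
  imports Defs "HOL-Analysis.L2_Norm"
begin

(* The diagonal perturbation Delta_ii = -min(sigma_i, eps) lowers every sigma_i by eps (or to 0)
   and gives det = prod_i (1 + lambda_i * max(sigma_i - eps, 0)^2); the content is the matching
   lower bound for an arbitrary Delta of spectral norm at most eps.

   Let A = Sigma + Delta, M = I + A Lambda A^H and w = A^H x, so that
   x^H M x = |x|^2 + sum_j lambda_j |w_j|^2.  On the set S of indices with lambda_i > 0 and
   sigma_i > eps put d_i = sigma_i - eps.  By Cauchy-Schwarz the linear form
   mu_i (x_i / (lambda_i d_i) + w_i),  where  mu_i^2 = (lambda_i d_i)^2 / (1 + lambda_i d_i^2),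
   has squared modulus at most |x_i|^2 + lambda_i |w_i|^2.  Hence M dominates X^H X for the
   matrix X with these rows on S and unit rows elsewhere, and det M >= |det X|^2 by a congruence.
   Up to the factors mu_i, det X is the determinant of the S x S block
   B = diag(1 / (lambda_i d_i) + sigma_i) + (Delta^H)_SS, and |z^H Delta^H z| <= eps |z|^2 gives
   Re (z^H B z) >= sum_i (1 / (lambda_i d_i) + d_i) |z_i|^2.  Since eigenvalues lie in the
   numerical range, |det B| is at least the product of these weights, and
   mu_i (1 / (lambda_i d_i) + d_i) = sqrt(1 + lambda_i d_i^2). *)

section \<open>Matrices acting on coordinate functions\<close>

(* Vectors are coordinate functions nat => complex; their length is given by the matrix or by an
   explicit bound. *)

definition mat_app :: "complex mat \<Rightarrow> (nat \<Rightarrow> complex) \<Rightarrow> nat \<Rightarrow> complex" where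
  "mat_app A x i = (\<Sum>j=0..<dim_col A. A $$ (i,j) * x j)"

definition qform :: "complex mat \<Rightarrow> (nat \<Rightarrow> complex) \<Rightarrow> complex" where
  "qform A x = (\<Sum>i=0..<dim_row A. cnj (x i) * mat_app A x i)"

definition sqnorm :: "nat \<Rightarrow> (nat \<Rightarrow> complex) \<Rightarrow> real" where
  "sqnorm n x = (\<Sum>i=0..<n. (cmod (x i))\<^sup>2)"

lemma sqnorm_nonneg: "sqnorm n x \<ge> 0"
  unfolding sqnorm_def by (intro sum_nonneg) auto

lemma sum_cnj_mult_self: "(\<Sum>i\<in>I. cnj (x i) * x i) = of_real (\<Sum>i\<in>I. (cmod (x i))\<^sup>2)"
  by (simp add: complex_norm_square mult.commute del: of_real_power)

lemma vec_2norm_vec: "vec_2norm (vec n x) = sqrt (sqnorm n x)"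
  unfolding vec_2norm_def sqnorm_def by (simp add: atLeast0LessThan)

lemma mat_app_mult:
  assumes "A \<in> carrier_mat n m" and "B \<in> carrier_mat m k" and "i < n"
  shows "mat_app (A * B) x i = mat_app A (mat_app B x) i"
proof -
  have "mat_app (A * B) x i = (\<Sum>l=0..<k. \<Sum>j=0..<m. A $$ (i,j) * B $$ (j,l) * x l)"
    unfolding mat_app_def using assms by (simp add: scalar_prod_def sum_distrib_right)
  also have "\<dots> = (\<Sum>j=0..<m. \<Sum>l=0..<k. A $$ (i,j) * B $$ (j,l) * x l)"
    by (rule sum.swap)
  also have "\<dots> = mat_app A (mat_app B x) i"
    unfolding mat_app_def using assms by (simp add: sum_distrib_left mult.assoc)
  finally show ?thesis .
qed

lemma mat_app_cong: "(\<And>j. j < dim_col A \<Longrightarrow> x j = y j) \<Longrightarrow> mat_app A x i = mat_app A y i"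
  unfolding mat_app_def by simp

lemma mat_app_one: "i < n \<Longrightarrow> mat_app (1\<^sub>m n) x i = x i"
  unfolding mat_app_def by (simp add: if_distrib[of "\<lambda>y. y * _"] cong: if_cong)

lemma mat_app_mat_diag_mult:
  assumes "B \<in> carrier_mat n m" and "i < n"
  shows "mat_app (mat_diag n c * B) x i = c i * mat_app B x i"
  using assms unfolding mat_app_def mat_diag_mult_left[OF assms(1)]
  by (simp add: sum_distrib_left mult.assoc)

lemma mat_app_mat_diag: "i < n \<Longrightarrow> mat_app (mat_diag n c) x i = c i * x i"
  unfolding mat_app_def mat_diag_def by (simp add: if_distrib[of "\<lambda>y. y * _"] cong: if_cong)

lemma det_mat_diag: "det (mat_diag n c) = (\<Prod>i=0..<n. c i)"
proof -
  have "det (mat_diag n c) = prod_list (diag_mat (mat_diag n c))"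
    by (rule det_upper_triangular) (auto simp: mat_diag_def upper_triangular_def)
  also have "\<dots> = (\<Prod>i=0..<n. c i)"
    by (simp add: prod_list_diag_prod mat_diag_def)
  finally show ?thesis .
qed

lemma mat_adjoint_carrier: "A \<in> carrier_mat n m \<Longrightarrow> mat_adjoint A \<in> carrier_mat m n"
  by (auto simp: mat_adjoint_def mat_of_rows_def)

lemma mat_adjoint_index:
  "A \<in> carrier_mat n m \<Longrightarrow> i < m \<Longrightarrow> j < n \<Longrightarrow> mat_adjoint A $$ (i,j) = cnj (A $$ (j,i))"
  by (simp add: mat_adjoint_def mat_of_rows_def)

lemma det_mat_adjoint:
  assumes "A \<in> carrier_mat n n"
  shows "det (mat_adjoint A) = cnj (det A)"
proof -
  interpret cnj: comm_ring_hom cnj by standard auto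
  have "mat_adjoint A = map_mat cnj (transpose_mat A)"
    using assms carrier_matD[OF mat_adjoint_carrier[OF assms]]
    by (intro eq_matI) (auto simp: mat_adjoint_index)
  thus ?thesis using det_transpose[OF assms] by simp
qed

lemma sum_cnj_mat_app_adjoint:
  assumes "A \<in> carrier_mat n m"
  shows "(\<Sum>i=0..<m. cnj (y i) * mat_app (mat_adjoint A) x i) = (\<Sum>j=0..<n. cnj (mat_app A y j) * x j)"
proof -
  have "(\<Sum>i=0..<m. cnj (y i) * mat_app (mat_adjoint A) x i)
      = (\<Sum>i=0..<m. \<Sum>j=0..<n. cnj (y i) * cnj (A $$ (j,i)) * x j)"
    unfolding mat_app_def using assms mat_adjoint_carrier[OF assms]
    by (simp add: mat_adjoint_index sum_distrib_left mult.assoc)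
  also have "\<dots> = (\<Sum>j=0..<n. cnj (mat_app A y j) * x j)"
    unfolding mat_app_def using assms
    by (subst sum.swap) (simp add: sum_distrib_left sum_distrib_right ac_simps)
  finally show ?thesis .
qed

lemma qform_congruence:
  assumes M: "M \<in> carrier_mat n n" and B: "B \<in> carrier_mat n n"
  shows "qform (mat_adjoint B * M * B) y = qform M (mat_app B y)"
proof -
  have B': "mat_adjoint B \<in> carrier_mat n n"
    by (rule mat_adjoint_carrier[OF B])
  have "mat_app (mat_adjoint B * M * B) y i = mat_app (mat_adjoint B) (mat_app M (mat_app B y)) i"
    if "i < n" for i
  proof -
    have "mat_app (mat_adjoint B * M * B) y i = mat_app (mat_adjoint B) (mat_app (M * B) y) i"
      using M B B' that by (simp add: mat_app_mult[of _ n n _ n] assoc_mult_mat[of _ n n _ n _ n])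
    also have "\<dots> = mat_app (mat_adjoint B) (mat_app M (mat_app B y)) i"
      using M B B' by (intro mat_app_cong) (simp add: mat_app_mult)
    finally show ?thesis .
  qed
  hence "qform (mat_adjoint B * M * B) y
      = (\<Sum>i=0..<n. cnj (y i) * mat_app (mat_adjoint B) (mat_app M (mat_app B y)) i)"
    unfolding qform_def using B' by simp
  also have "\<dots> = qform M (mat_app B y)"
    unfolding sum_cnj_mat_app_adjoint[OF B] qform_def using M by simp
  finally show ?thesis .
qed

lemma det_congruence:
  assumes "M \<in> carrier_mat n n" and "B \<in> carrier_mat n n"
  shows "det (mat_adjoint B * M * B) = of_real ((cmod (det B))\<^sup>2) * det M"
proof -
  have "det (mat_adjoint B * M * B) = cnj (det B) * det M * det B"
    using assms mat_adjoint_carrier[OF assms(2)]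
    by (simp add: det_mult[of _ n] det_mat_adjoint)
  thus ?thesis by (simp add: complex_norm_square mult.commute del: of_real_power)
qed

lemma cmod_sum_cnj_le:
  "cmod (\<Sum>i=0..<n. x i * cnj (y i)) \<le> sqrt (sqnorm n x) * sqrt (sqnorm n y)"
proof -
  have "cmod (\<Sum>i=0..<n. x i * cnj (y i)) \<le> (\<Sum>i=0..<n. \<bar>cmod (x i)\<bar> * \<bar>cmod (y i)\<bar>)"
    by (rule order_trans[OF norm_sum]) (simp add: norm_mult)
  also have "\<dots> \<le> L2_set (\<lambda>i. cmod (x i)) {0..<n} * L2_set (\<lambda>i. cmod (y i)) {0..<n}"
    by (rule L2_set_mult_ineq)
  finally show ?thesis unfolding L2_set_def sqnorm_def by simp
qed

section \<open>Determinant bounds from the numerical range\<close>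

lemma det_mem_if_eigenvalues_mem:
  fixes A :: "complex mat"
  assumes A: "A \<in> carrier_mat n n" and eig: "\<And>e. eigenvalue A e \<Longrightarrow> e \<in> T"
    and one: "1 \<in> T" and mult: "\<And>a b. a \<in> T \<Longrightarrow> b \<in> T \<Longrightarrow> a * b \<in> T"
  shows "det A \<in> T"
proof -
  obtain es where cp: "char_poly A = (\<Prod>a\<leftarrow>es. [:- a, 1:])" and len: "length es = n"
    using char_poly_factorized[OF A] by blast
  have "poly (char_poly A) 0 = det (- char_matrix A 0)"
    by (rule char_poly_matrix[OF A])
  also have "- char_matrix A 0 = (-1) \<cdot>\<^sub>m A"
    using A by (auto simp: char_matrix_def)
  finally have "poly (char_poly A) 0 = (-1) ^ n * det A"
    using A by simp
  moreover have "poly (\<Prod>a\<leftarrow>es. [:- a, 1:]) 0 = (-1) ^ length es * prod_list es"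
    by (induct es) (auto simp: poly_prod_list)
  ultimately have "det A = prod_list es"
    using cp len by simp
  moreover have "\<forall>e\<in>set es. e \<in> T"
  proof
    fix e assume "e \<in> set es"
    hence "poly (char_poly A) e = 0"
      unfolding cp by (induct es) (auto simp: poly_prod_list)
    thus "e \<in> T" using eig eigenvalue_root_char_poly[OF A] by simp
  qed
  hence "prod_list es \<in> T"
    by (induct es) (auto simp: one mult)
  ultimately show ?thesis by simp
qed

lemma eigenvalue_qform:
  fixes A :: "complex mat"
  assumes A: "A \<in> carrier_mat n n" and "eigenvalue A e"
  obtains x where "sqnorm n x > 0" and "qform A x = e * of_real (sqnorm n x)"
proof -
  obtain v where v: "v \<in> carrier_vec n" "v \<noteq> 0\<^sub>v n" "A *\<^sub>v v = e \<cdot>\<^sub>v v"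
    using assms unfolding eigenvalue_def eigenvector_def by auto
  obtain k where k: "k < n" "v $ k \<noteq> 0"
    using v(1,2) by (metis eq_vecI carrier_vecD index_zero_vec)
  have "sqnorm n (\<lambda>i. v $ i) > 0"
    unfolding sqnorm_def using k by (intro sum_pos2[of _ k]) auto
  moreover have "mat_app A (\<lambda>i. v $ i) i = e * v $ i" if "i < n" for i
  proof -
    have "mat_app A (\<lambda>i. v $ i) i = (A *\<^sub>v v) $ i"
      unfolding mat_app_def using A v(1) that by (simp add: scalar_prod_def)
    thus ?thesis using v(3) v(1) that by simp
  qed
  hence "qform A (\<lambda>i. v $ i) = e * (\<Sum>i=0..<n. cnj (v $ i) * v $ i)"
    unfolding qform_def using A by (simp add: sum_distrib_left ac_simps)
  hence "qform A (\<lambda>i. v $ i) = e * of_real (sqnorm n (\<lambda>i. v $ i))"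
    unfolding sqnorm_def sum_cnj_mult_self .
  ultimately show ?thesis using that by blast
qed

lemma cmod_det_ge_one_if_Re_qform_ge:
  fixes A :: "complex mat"
  assumes A: "A \<in> carrier_mat n n" and "\<And>x. Re (qform A x) \<ge> sqnorm n x"
  shows "cmod (det A) \<ge> 1"
proof -
  have "det A \<in> {z. cmod z \<ge> 1}"
  proof (rule det_mem_if_eigenvalues_mem[OF A])
    fix e assume "eigenvalue A e"
    then obtain x where x: "sqnorm n x > 0" "qform A x = e * of_real (sqnorm n x)"
      using eigenvalue_qform[OF A] by blast
    have "Re e * sqnorm n x \<ge> 1 * sqnorm n x"
      using assms(2)[of x] x(2) by simp
    hence "Re e \<ge> 1"
      using x(1) by (simp add: mult_le_cancel_right)
    thus "e \<in> {z. cmod z \<ge> 1}"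
      using abs_Re_le_cmod[of e] by simp
  next
    fix a b :: complex
    assume "a \<in> {z. cmod z \<ge> 1}" "b \<in> {z. cmod z \<ge> 1}"
    hence "1 * 1 \<le> cmod a * cmod b" by (intro mult_mono) auto
    thus "a * b \<in> {z. cmod z \<ge> 1}" by (simp add: norm_mult)
  qed simp
  thus ?thesis by simp
qed

lemma det_real_ge_one_if_qform_ge:
  fixes A :: "complex mat" and Q :: "(nat \<Rightarrow> complex) \<Rightarrow> real"
  assumes A: "A \<in> carrier_mat n n"
    and "\<And>x. qform A x = of_real (Q x)" and "\<And>x. Q x \<ge> sqnorm n x"
  shows "\<exists>R\<ge>1. det A = of_real R"
proof -
  have "det A \<in> {of_real R | R. R \<ge> 1}"
  proof (rule det_mem_if_eigenvalues_mem[OF A])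
    fix e assume "eigenvalue A e"
    then obtain x where x: "sqnorm n x > 0" "qform A x = e * of_real (sqnorm n x)"
      using eigenvalue_qform[OF A] by blast
    have "e = of_real (Q x / sqnorm n x)"
      using x assms(2)[of x] by (simp add: field_simps)
    moreover have "Q x / sqnorm n x \<ge> 1"
      using x(1) assms(3)[of x] by simp
    ultimately show "e \<in> {of_real R | R. R \<ge> 1}" by blast
  next
    fix a b :: complex
    assume "a \<in> {of_real R | R. R \<ge> 1}" "b \<in> {of_real R | R. R \<ge> 1}"
    then obtain R R' where RR': "a = of_real R" "b = of_real R'" "R \<ge> 1" "R' \<ge> 1" by blast
    hence "1 * 1 \<le> R * R'" by (intro mult_mono) auto
    thus "a * b \<in> {of_real R | R. R \<ge> 1}" using RR' by force
  qed force
  thus ?thesis by auto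
qed

lemma det_one_plus_square_zero:
  fixes F :: "complex mat"
  assumes F: "F \<in> carrier_mat n n" and FF: "F * F = 0\<^sub>m n n"
  shows "det (1\<^sub>m n + F) = 1"
proof -
  have "det (1\<^sub>m n + F) \<in> {1}"
  proof (rule det_mem_if_eigenvalues_mem)
    fix e assume "eigenvalue (1\<^sub>m n + F) e"
    then obtain v where v: "v \<in> carrier_vec n" "v \<noteq> 0\<^sub>v n" "(1\<^sub>m n + F) *\<^sub>v v = e \<cdot>\<^sub>v v"
      using F unfolding eigenvalue_def eigenvector_def by fastforce
    have Fv: "F *\<^sub>v v = (e - 1) \<cdot>\<^sub>v v"
    proof (rule eq_vecI)
      fix i assume "i < dim_vec ((e - 1) \<cdot>\<^sub>v v)"
      hence i: "i < n" using v(1) by simp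
      have "((1\<^sub>m n + F) *\<^sub>v v) $ i = v $ i + (F *\<^sub>v v) $ i"
        using F v(1) i by (simp add: add_mult_distrib_mat_vec[of _ n n])
      thus "(F *\<^sub>v v) $ i = ((e - 1) \<cdot>\<^sub>v v) $ i"
        using v(3) v(1) i by (simp add: algebra_simps)
    qed (use F v(1) in simp)
    have "((e - 1) * (e - 1)) \<cdot>\<^sub>v v = F *\<^sub>v (F *\<^sub>v v)"
      using F v(1) by (simp add: Fv mult_mat_vec smult_smult_assoc)
    also have "\<dots> = 0\<^sub>v n"
      using F v(1) by (simp add: assoc_mult_mat_vec[symmetric, of _ n n _ n] FF, intro eq_vecI)
        (simp_all add: scalar_prod_def)
    finally have "((e - 1) * (e - 1)) \<cdot>\<^sub>v v = 0\<^sub>v n" .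
    moreover obtain k where "k < n" "v $ k \<noteq> 0"
      using v(1,2) by (metis eq_vecI carrier_vecD index_zero_vec)
    ultimately have "(e - 1) * (e - 1) * v $ k = 0"
      by (metis index_smult_vec(1) index_zero_vec(1) v(1) carrier_vecD)
    thus "e \<in> {1}" using \<open>v $ k \<noteq> 0\<close> by simp
  qed (use F in auto)
  thus ?thesis by simp
qed

lemma cmod_det_ge_prod_if_Re_qform_ge:
  fixes A :: "complex mat" and w :: "nat \<Rightarrow> real"
  assumes A: "A \<in> carrier_mat n n" and w: "\<And>i. i < n \<Longrightarrow> w i > 0"
    and Re_qform: "\<And>x. Re (qform A x) \<ge> (\<Sum>i=0..<n. w i * (cmod (x i))\<^sup>2)"
  shows "cmod (det A) \<ge> (\<Prod>i=0..<n. w i)"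
proof -
  define D where "D = mat_diag n (\<lambda>i. complex_of_real (1 / sqrt (w i)))"
  have D: "D \<in> carrier_mat n n"
    by (simp add: D_def)
  have "Re (qform (mat_adjoint D * A * D) x) \<ge> sqnorm n x" for x
  proof -
    have "(\<Sum>i=0..<n. w i * (cmod (mat_app D x i))\<^sup>2) = sqnorm n x"
      unfolding sqnorm_def
    proof (intro sum.cong refl)
      fix i assume "i \<in> {0..<n}"
      hence "w i > 0" using w by simp
      thus "w i * (cmod (mat_app D x i))\<^sup>2 = (cmod (x i))\<^sup>2"
        using \<open>i \<in> {0..<n}\<close> by (simp add: D_def mat_app_mat_diag norm_divide power_divide)
    qed
    thus ?thesis
      using Re_qform[of "mat_app D x"] by (simp add: qform_congruence[OF A D])
  qed
  hence "cmod (det (mat_adjoint D * A * D)) \<ge> 1"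
    using A D mat_adjoint_carrier[OF D] by (intro cmod_det_ge_one_if_Re_qform_ge) auto
  moreover have "(cmod (det D))\<^sup>2 = 1 / (\<Prod>i=0..<n. w i)"
  proof -
    have "cmod (det D) = (\<Prod>i=0..<n. 1 / sqrt (w i))"
      unfolding D_def det_mat_diag of_real_prod[symmetric] norm_of_real
      using w by (intro abs_of_nonneg prod_nonneg) (simp add: less_imp_le)
    also have "\<dots>\<^sup>2 = (\<Prod>i=0..<n. 1 / w i)"
      unfolding prod_power_distrib using w by (intro prod.cong) (simp_all add: power_divide less_imp_le)
    finally show ?thesis by (simp add: prod_dividef)
  qed
  moreover have "cmod (det (mat_adjoint D * A * D)) = (cmod (det D))\<^sup>2 * cmod (det A)"
    by (simp add: det_congruence[OF A D] norm_mult norm_power)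
  moreover have "(\<Prod>i=0..<n. w i) > 0"
    using w by (intro prod_pos) auto
  ultimately show ?thesis
    by (simp add: field_simps)
qed

lemma det_zero_block_if_unit_rows:
  fixes Y :: "complex mat"
  assumes Y: "Y \<in> carrier_mat n n"
    and unit_row: "\<And>i l. i < n \<Longrightarrow> l < n \<Longrightarrow> i \<notin> S \<Longrightarrow> Y $$ (i,l) = (if i = l then 1 else 0)"
  shows "det (mat n n (\<lambda>(i,l). if i \<in> S \<and> l \<notin> S then 0 else Y $$ (i,l))) = det Y"
proof -
  define Y' where "Y' = mat n n (\<lambda>(i,l). if i \<in> S \<and> l \<notin> S then 0 else Y $$ (i,l))"
  define F where "F = mat n n (\<lambda>(i,l). if i \<in> S \<and> l \<notin> S then Y $$ (i,l) else 0)"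
  have carrier: "Y' \<in> carrier_mat n n" "F \<in> carrier_mat n n"
    unfolding Y'_def F_def by auto
  have "F * Y' = F"
  proof (rule eq_matI)
    fix i l assume "i < dim_row F" "l < dim_col F"
    hence il: "i < n" "l < n" using carrier by auto
    have "(F * Y') $$ (i,l) = (\<Sum>j=0..<n. F $$ (i,j) * Y' $$ (j,l))"
      using il carrier by (simp add: scalar_prod_def)
    also have "\<dots> = (\<Sum>j=0..<n. if j = l then F $$ (i,l) else 0)"
      using il by (intro sum.cong refl) (auto simp: F_def Y'_def unit_row)
    finally show "(F * Y') $$ (i,l) = F $$ (i,l)"
      using il by simp
  qed (use carrier in auto)
  moreover have "F * F = 0\<^sub>m n n"
    unfolding F_def by (intro eq_matI) (auto simp: scalar_prod_def intro!: sum.neutral)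
  moreover have "Y = Y' + F"
    using Y unfolding Y'_def F_def by (intro eq_matI) auto
  ultimately have "Y = (1\<^sub>m n + F) * Y'"
    using carrier by (simp add: add_mult_distrib_mat[of _ n n])
  hence "det Y = det Y'"
    using carrier by (simp add: det_mult[of _ n] det_one_plus_square_zero \<open>F * F = 0\<^sub>m n n\<close>)
  thus ?thesis unfolding Y'_def ..
qed

lemma Re_det_ge_sq_cmod_det_if_qform_ge:
  fixes M X :: "complex mat" and Q :: "(nat \<Rightarrow> complex) \<Rightarrow> real"
  assumes M: "M \<in> carrier_mat n n" and X: "X \<in> carrier_mat n n"
    and Q: "\<And>x. qform M x = of_real (Q x)"
    and Q_ge: "\<And>x. Q x \<ge> sqnorm n x" and Q_ge_X: "\<And>x. Q x \<ge> sqnorm n (mat_app X x)"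
  shows "Re (det M) \<ge> (cmod (det X))\<^sup>2"
proof -
  obtain R where R: "R \<ge> 1" "det M = of_real R"
    using det_real_ge_one_if_qform_ge[OF M Q Q_ge] by blast
  show ?thesis
  proof (cases "det X = 0")
    case True
    thus ?thesis using R by simp
  next
    case False
    define Xi where "Xi = (1 / det X) \<cdot>\<^sub>m adj_mat X"
    have Xi: "Xi \<in> carrier_mat n n"
      unfolding Xi_def using adj_mat[OF X] by simp
    have X_Xi: "X * Xi = 1\<^sub>m n"
      unfolding Xi_def using adj_mat[OF X] X False
      by (simp add: mult_smult_distrib[of _ n n _ n], intro eq_matI) auto
    have "Re (qform (mat_adjoint Xi * M * Xi) y) \<ge> sqnorm n y" for y
    proof -
      have "sqnorm n (mat_app X (mat_app Xi y)) = sqnorm n y"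
        unfolding sqnorm_def using X Xi
        by (intro sum.cong) (simp_all add: mat_app_mult[symmetric] X_Xi mat_app_one)
      thus ?thesis
        using Q_ge_X[of "mat_app Xi y"] by (simp add: qform_congruence[OF M Xi] Q)
    qed
    hence "cmod (det (mat_adjoint Xi * M * Xi)) \<ge> 1"
      using M Xi mat_adjoint_carrier[OF Xi] by (intro cmod_det_ge_one_if_Re_qform_ge) auto
    hence "(cmod (det Xi))\<^sup>2 * R \<ge> 1"
      using R by (simp add: det_congruence[OF M Xi] norm_mult norm_power)
    moreover have "cmod (det X) * cmod (det Xi) = 1"
      using det_mult[OF X Xi] X_Xi by (simp flip: norm_mult)
    ultimately have "(cmod (det X))\<^sup>2 * 1 \<le> (cmod (det X))\<^sup>2 * ((cmod (det Xi))\<^sup>2 * R)"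
      by (intro mult_left_mono) auto
    also have "\<dots> = R"
      using \<open>cmod (det X) * cmod (det Xi) = 1\<close> by (simp flip: mult.assoc power_mult_distrib)
    finally show ?thesis
      using R by simp
  qed
qed

lemma Re_det_ge_prod_sq_cmod_det_if_qform_ge:
  fixes M Y :: "complex mat" and Q :: "(nat \<Rightarrow> complex) \<Rightarrow> real" and c :: "nat \<Rightarrow> real"
  assumes M: "M \<in> carrier_mat n n" and Y: "Y \<in> carrier_mat n n" and c: "\<And>i. i < n \<Longrightarrow> c i \<ge> 0"
    and Q: "\<And>x. qform M x = of_real (Q x)" and Q_ge: "\<And>x. Q x \<ge> sqnorm n x"
    and Q_ge_Y: "\<And>x. Q x \<ge> (\<Sum>i=0..<n. c i * (cmod (mat_app Y x i))\<^sup>2)"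
  shows "Re (det M) \<ge> (\<Prod>i=0..<n. c i) * (cmod (det Y))\<^sup>2"
proof -
  define X where "X = mat_diag n (\<lambda>i. of_real (sqrt (c i))) * Y"
  have X: "X \<in> carrier_mat n n"
    unfolding X_def by (rule mult_carrier_mat[OF mat_diag_dim Y])
  have "sqnorm n (mat_app X x) = (\<Sum>i=0..<n. c i * (cmod (mat_app Y x i))\<^sup>2)" for x
    unfolding sqnorm_def X_def using c
    by (intro sum.cong) (simp_all add: mat_app_mat_diag_mult[OF Y] norm_mult power_mult_distrib)
  hence "Re (det M) \<ge> (cmod (det X))\<^sup>2"
    using Q_ge_Y by (intro Re_det_ge_sq_cmod_det_if_qform_ge[OF M X Q Q_ge]) simp
  moreover have "cmod (det X) = (\<Prod>i=0..<n. sqrt (c i)) * cmod (det Y)"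
  proof -
    have "(\<Prod>i=0..<n. sqrt (c i)) \<ge> 0"
      using c by (intro prod_nonneg) simp
    thus ?thesis
      unfolding X_def using Y by (simp add: det_mult[of _ n] det_mat_diag norm_mult flip: of_real_prod)
  qed
  moreover have "(\<Prod>i=0..<n. sqrt (c i))\<^sup>2 = (\<Prod>i=0..<n. c i)"
    unfolding prod_power_distrib using c by (intro prod.cong) auto
  ultimately show ?thesis
    by (simp add: power_mult_distrib)
qed

section \<open>The spectral norm\<close>

lemma vec_2norm_smult: "vec_2norm (c \<cdot>\<^sub>v x) = cmod c * vec_2norm x"
  unfolding vec_2norm_def
  by (simp add: norm_mult power_mult_distrib sum_distrib_left[symmetric] real_sqrt_mult)

lemma bdd_above_spectral_norm_set:
  "bdd_above {vec_2norm (A *\<^sub>v x) | x. x \<in> carrier_vec (dim_col A) \<and> vec_2norm x \<le> 1}"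
proof (rule bdd_aboveI, safe)
  fix x :: "complex vec"
  assume x: "x \<in> carrier_vec (dim_col A)" "vec_2norm x \<le> 1"
  have x_le: "cmod (x $ j) \<le> 1" if "j < dim_col A" for j
  proof -
    have "(cmod (x $ j))\<^sup>2 \<le> (\<Sum>i<dim_col A. (cmod (x $ i))\<^sup>2)"
      using that by (intro member_le_sum) auto
    also have "\<dots> \<le> 1"
      using x unfolding vec_2norm_def by simp
    finally show ?thesis by (simp add: power_le_one_iff abs_le_iff)
  qed
  have "(cmod ((A *\<^sub>v x) $ i))\<^sup>2 \<le> (\<Sum>j<dim_col A. cmod (A $$ (i,j)))\<^sup>2" if "i < dim_row A" for i
  proof (rule power_mono)
    have "cmod ((A *\<^sub>v x) $ i) \<le> (\<Sum>j<dim_col A. cmod (A $$ (i,j)) * cmod (x $ j))"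
      using that x(1) by (auto simp: scalar_prod_def atLeast0LessThan norm_mult intro: norm_sum[THEN order.trans])
    also have "\<dots> \<le> (\<Sum>j<dim_col A. cmod (A $$ (i,j)))"
      using x_le by (intro sum_mono) (auto intro: mult_left_le)
    finally show "cmod ((A *\<^sub>v x) $ i) \<le> (\<Sum>j<dim_col A. cmod (A $$ (i,j)))" .
  qed simp
  thus "vec_2norm (A *\<^sub>v x) \<le> sqrt (\<Sum>i<dim_row A. (\<Sum>j<dim_col A. cmod (A $$ (i,j)))\<^sup>2)"
    unfolding vec_2norm_def by (auto intro!: sum_mono)
qed

lemma vec_2norm_mult_mat_vec_le:
  assumes x: "x \<in> carrier_vec (dim_col A)"
  shows "vec_2norm (A *\<^sub>v x) \<le> spectral_norm A * vec_2norm x"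
proof (cases "vec_2norm x = 0")
  case True
  hence "\<forall>j<dim_col A. x $ j = 0"
    using x unfolding vec_2norm_def by (simp add: sum_nonneg_eq_0_iff)
  hence "A *\<^sub>v x = 0\<^sub>v (dim_row A)"
    using x by (intro eq_vecI) (auto simp: scalar_prod_def)
  thus ?thesis
    using True by (simp add: vec_2norm_def)
next
  case False
  moreover have "vec_2norm x \<ge> 0"
    unfolding vec_2norm_def by (simp add: sum_nonneg)
  ultimately have pos: "vec_2norm x > 0"
    by simp
  define c where "c = complex_of_real (1 / vec_2norm x)"
  have "vec_2norm (c \<cdot>\<^sub>v x) = 1"
    unfolding c_def vec_2norm_smult using pos by (simp add: norm_divide)
  hence "vec_2norm (A *\<^sub>v (c \<cdot>\<^sub>v x)) \<le> spectral_norm A"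
    unfolding spectral_norm_def using x
    by (intro cSup_upper[OF _ bdd_above_spectral_norm_set]) auto
  moreover have "A *\<^sub>v (c \<cdot>\<^sub>v x) = c \<cdot>\<^sub>v (A *\<^sub>v x)"
    using x by (intro mult_mat_vec[of A "dim_row A" "dim_col A"]) auto
  ultimately show ?thesis
    using pos by (simp add: c_def vec_2norm_smult norm_divide field_simps)
qed

lemma sqrt_sqnorm_mat_app_le:
  assumes "A \<in> carrier_mat n m"
  shows "sqrt (sqnorm n (mat_app A x)) \<le> spectral_norm A * sqrt (sqnorm m x)"
proof -
  have "A *\<^sub>v vec m x = vec n (mat_app A x)"
    using assms by (intro eq_vecI) (auto simp: mat_app_def scalar_prod_def)
  thus ?thesis
    using vec_2norm_mult_mat_vec_le[of "vec m x" A] assms by (simp add: vec_2norm_vec)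
qed

lemma spectral_norm_rect_diagonal_le:
  fixes D :: "complex mat"
  assumes D: "D \<in> carrier_mat r t" "rect_diagonal D"
    and diag: "\<And>i. i < min r t \<Longrightarrow> cmod (D $$ (i,i)) \<le> \<epsilon>" and "\<epsilon> \<ge> 0"
  shows "spectral_norm D \<le> \<epsilon>"
  unfolding spectral_norm_def
proof (rule cSup_least)
  show "{vec_2norm (D *\<^sub>v x) | x. x \<in> carrier_vec (dim_col D) \<and> vec_2norm x \<le> 1} \<noteq> {}"
    using D(1) by (auto intro!: exI[of _ "0\<^sub>v t"] simp: vec_2norm_def)
next
  fix y assume "y \<in> {vec_2norm (D *\<^sub>v x) | x. x \<in> carrier_vec (dim_col D) \<and> vec_2norm x \<le> 1}"
  then obtain x where x: "x \<in> carrier_vec t" "vec_2norm x \<le> 1" and y: "y = vec_2norm (D *\<^sub>v x)"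
    using D(1) by auto
  have "(D *\<^sub>v x) $ i = (if i < t then D $$ (i,i) * x $ i else 0)" if "i < r" for i
  proof -
    have "(D *\<^sub>v x) $ i = (\<Sum>j=0..<t. D $$ (i,j) * x $ j)"
      using that x(1) D by (simp add: scalar_prod_def)
    also have "\<dots> = (\<Sum>j=0..<t. if j = i then D $$ (i,i) * x $ i else 0)"
      using that D unfolding rect_diagonal_def by (intro sum.cong) auto
    finally show ?thesis by simp
  qed
  hence "(\<Sum>i<r. (cmod ((D *\<^sub>v x) $ i))\<^sup>2) \<le> (\<Sum>i<r. if i < t then \<epsilon>\<^sup>2 * (cmod (x $ i))\<^sup>2 else 0)"
    using diag \<open>\<epsilon> \<ge> 0\<close>
    by (intro sum_mono) (auto simp: norm_mult power_mult_distrib intro!: mult_right_mono power_mono)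
  also have "\<dots> \<le> (\<Sum>i<t. \<epsilon>\<^sup>2 * (cmod (x $ i))\<^sup>2)"
    by (simp add: sum.If_cases) (intro sum_mono2, auto)
  also have "\<dots> \<le> \<epsilon>\<^sup>2"
    using x unfolding vec_2norm_def by (simp add: sum_distrib_left[symmetric] mult_left_le)
  finally have "sqrt (\<Sum>i<r. (cmod ((D *\<^sub>v x) $ i))\<^sup>2) \<le> sqrt (\<epsilon>\<^sup>2)"
    by (rule real_sqrt_le_mono)
  moreover have "y = sqrt (\<Sum>i<r. (cmod ((D *\<^sub>v x) $ i))\<^sup>2)"
    unfolding y vec_2norm_def using D(1) by simp
  ultimately show "y \<le> \<epsilon>"
    using \<open>\<epsilon> \<ge> 0\<close> by simp
qed

lemma cmod_sum_mult_cnj_mat_app_le: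
  assumes "A \<in> carrier_mat n m"
  shows "cmod (\<Sum>i=0..<n. y i * cnj (mat_app A x i))
    \<le> spectral_norm A * sqrt (sqnorm m x) * sqrt (sqnorm n y)"
proof -
  have "cmod (\<Sum>i=0..<n. y i * cnj (mat_app A x i)) \<le> sqrt (sqnorm n y) * sqrt (sqnorm n (mat_app A x))"
    by (rule cmod_sum_cnj_le)
  also have "\<dots> \<le> sqrt (sqnorm n y) * (spectral_norm A * sqrt (sqnorm m x))"
    by (intro mult_left_mono sqrt_sqnorm_mat_app_le[OF assms]) (simp add: sqnorm_nonneg)
  finally show ?thesis by (simp only: ac_simps)
qed

section \<open>Perturbed diagonal blocks\<close>

lemma cmod_qform_adjoint_le:
  fixes \<Delta> :: "complex mat"
  assumes \<Delta>: "\<Delta> \<in> carrier_mat r t" "spectral_norm \<Delta> \<le> \<epsilon>" and z: "\<And>i. i \<ge> min r t \<Longrightarrow> z i = 0"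
  shows "cmod (\<Sum>i=0..<r. cnj (z i) * mat_app (mat_adjoint \<Delta>) z i) \<le> \<epsilon> * sqnorm r z"
proof -
  have restrict: "(\<Sum>i=0..<n. f i) = (\<Sum>i=0..<min r t. f i)"
    if "n \<ge> min r t" and "\<And>i. i \<ge> min r t \<Longrightarrow> f i = 0" for n and f :: "nat \<Rightarrow> 'a::comm_monoid_add"
    using that by (intro sum.mono_neutral_right) auto
  have "sqnorm t z = sqnorm r z"
    unfolding sqnorm_def using z by (subst (1 2) restrict) auto
  moreover have "(\<Sum>i=0..<r. cnj (z i) * mat_app (mat_adjoint \<Delta>) z i)
      = (\<Sum>i=0..<t. cnj (z i) * mat_app (mat_adjoint \<Delta>) z i)"
    using z by (subst (1 2) restrict) auto
  moreover have "(\<Sum>i=0..<t. cnj (z i) * mat_app (mat_adjoint \<Delta>) z i) = (\<Sum>j=0..<r. z j * cnj (mat_app \<Delta> z j))"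
    unfolding sum_cnj_mat_app_adjoint[OF \<Delta>(1)] by (simp add: mult.commute)
  ultimately have "cmod (\<Sum>i=0..<r. cnj (z i) * mat_app (mat_adjoint \<Delta>) z i) \<le> spectral_norm \<Delta> * sqnorm r z"
    using cmod_sum_mult_cnj_mat_app_le[OF \<Delta>(1), of z z] by (simp add: mult.assoc sqnorm_nonneg)
  also have "\<dots> \<le> \<epsilon> * sqnorm r z"
    using \<Delta>(2) by (intro mult_right_mono sqnorm_nonneg)
  finally show ?thesis .
qed

lemma Re_qform_diag_add_adjoint_block_ge:
  fixes \<Delta> :: "complex mat" and h :: "nat \<Rightarrow> real"
  assumes \<Delta>: "\<Delta> \<in> carrier_mat r t" "spectral_norm \<Delta> \<le> \<epsilon>" and S: "S \<subseteq> {..<min r t}"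
  shows "Re (qform (mat r r (\<lambda>(i,l). (if i = l then (if i \<in> S then of_real (h i) else 1) else 0)
      + (if i \<in> S \<and> l \<in> S then cnj (\<Delta> $$ (l,i)) else 0))) x)
    \<ge> (\<Sum>i=0..<r. (if i \<in> S then h i - \<epsilon> else 1) * (cmod (x i))\<^sup>2)"
    (is "Re (qform ?B x) \<ge> _")
proof -
  define z where "z i = (if i \<in> S then x i else 0)" for i
  define K where "K = (\<Sum>i=0..<r. cnj (z i) * mat_app (mat_adjoint \<Delta>) z i)"
  have "mat_app ?B x i = (if i \<in> S then of_real (h i) * x i + mat_app (mat_adjoint \<Delta>) z i else x i)"
    if "i < r" for i
    using that S \<Delta>(1) mat_adjoint_carrier[OF \<Delta>(1)]
    by (auto simp: mat_app_def z_def mat_adjoint_index distrib_right sum.distrib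
        if_distrib[of "\<lambda>y. y * _"] cong: if_cong intro!: sum.cong)
  hence "qform ?B x = of_real (\<Sum>i=0..<r. (if i \<in> S then h i else 1) * (cmod (x i))\<^sup>2) + K"
    unfolding qform_def K_def of_real_sum sum.distrib[symmetric]
    by (intro sum.cong) (auto simp: z_def algebra_simps complex_norm_square simp del: of_real_power)
  moreover have "cmod K \<le> \<epsilon> * sqnorm r z"
    unfolding K_def using S by (intro cmod_qform_adjoint_le[OF \<Delta>]) (auto simp: z_def)
  hence "Re K \<ge> - (\<epsilon> * sqnorm r z)"
    using abs_Re_le_cmod[of K] by linarith
  moreover have "(\<Sum>i=0..<r. (if i \<in> S then h i - \<epsilon> else 1) * (cmod (x i))\<^sup>2)
      = (\<Sum>i=0..<r. (if i \<in> S then h i else 1) * (cmod (x i))\<^sup>2) - \<epsilon> * sqnorm r z"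
    unfolding sqnorm_def sum_distrib_left sum_subtractf[symmetric]
    by (intro sum.cong) (auto simp: z_def algebra_simps)
  ultimately show ?thesis
    by simp
qed

lemma cmod_det_ge_prod_adjoint_block:
  fixes Y \<Delta> :: "complex mat" and h :: "nat \<Rightarrow> real"
  assumes \<Delta>: "\<Delta> \<in> carrier_mat r t" "spectral_norm \<Delta> \<le> \<epsilon>"
    and S: "S \<subseteq> {..<min r t}" and Y: "Y \<in> carrier_mat r r"
    and unit_row: "\<And>i l. i < r \<Longrightarrow> l < r \<Longrightarrow> i \<notin> S \<Longrightarrow> Y $$ (i,l) = (if i = l then 1 else 0)"
    and block: "\<And>i l. i \<in> S \<Longrightarrow> l \<in> S \<Longrightarrow>
      Y $$ (i,l) = (if i = l then of_real (h i) else 0) + cnj (\<Delta> $$ (l,i))"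
    and h: "\<And>i. i \<in> S \<Longrightarrow> h i > \<epsilon>"
  shows "cmod (det Y) \<ge> (\<Prod>i\<in>S. h i - \<epsilon>)"
proof -
  define Y' where "Y' = mat r r (\<lambda>(i,l). if i \<in> S \<and> l \<notin> S then 0 else Y $$ (i,l))"
  have "Y' = mat r r (\<lambda>(i,l). (if i = l then (if i \<in> S then of_real (h i) else 1) else 0)
      + (if i \<in> S \<and> l \<in> S then cnj (\<Delta> $$ (l,i)) else 0))"
    unfolding Y'_def by (intro eq_matI) (auto simp: unit_row block)
  hence "cmod (det Y') \<ge> (\<Prod>i=0..<r. if i \<in> S then h i - \<epsilon> else 1)"
    using h by (intro cmod_det_ge_prod_if_Re_qform_ge) (auto intro: Re_qform_diag_add_adjoint_block_ge[OF \<Delta> S])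
  moreover have "(\<Prod>i=0..<r. if i \<in> S then h i - \<epsilon> else 1) = (\<Prod>i\<in>S. h i - \<epsilon>)"
    using S by (simp add: prod.If_cases Int_absorb1 subset_iff)
  moreover have "det Y' = det Y"
    unfolding Y'_def by (rule det_zero_block_if_unit_rows[OF Y unit_row])
  ultimately show ?thesis by simp
qed

section \<open>The objective\<close>

lemma cmat_rect_diagonal:
  assumes "L \<in> carrier_mat t t" and "rect_diagonal L"
  shows "cmat L = mat_diag t (\<lambda>j. of_real (L $$ (j,j)))"
  using assms by (intro eq_matI) (auto simp: cmat_def mat_diag_def rect_diagonal_def)

lemma objective_matrix_carrier:
  assumes "A \<in> carrier_mat r t" and "L \<in> carrier_mat t t"
  shows "1\<^sub>m r + A * cmat L * mat_adjoint A \<in> carrier_mat r r"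
  using assms mat_adjoint_carrier[OF assms(1)] by (simp add: cmat_def)

lemma objective_matrix_index:
  fixes A :: "complex mat" and L :: "real mat"
  assumes A: "A \<in> carrier_mat r t" and L: "L \<in> carrier_mat t t" "rect_diagonal L"
    and "i < r" and "l < r"
  shows "(1\<^sub>m r + A * cmat L * mat_adjoint A) $$ (i,l)
    = (if i = l then 1 else 0) + (\<Sum>j=0..<t. of_real (L $$ (j,j)) * A $$ (i,j) * cnj (A $$ (l,j)))"
proof -
  have "A * cmat L = mat r t (\<lambda>(i,j). A $$ (i,j) * of_real (L $$ (j,j)))"
    unfolding cmat_rect_diagonal[OF L] by (rule mat_diag_mult_right[OF A])
  thus ?thesis
    using assms mat_adjoint_carrier[OF A]
    by (auto simp: scalar_prod_def mat_adjoint_index ac_simps intro!: sum.cong)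
qed

lemma qform_objective_matrix:
  fixes A :: "complex mat" and L :: "real mat"
  assumes A: "A \<in> carrier_mat r t" and L: "L \<in> carrier_mat t t" "rect_diagonal L"
  shows "qform (1\<^sub>m r + A * cmat L * mat_adjoint A) x
    = of_real (sqnorm r x + (\<Sum>j=0..<t. L $$ (j,j) * (cmod (mat_app (mat_adjoint A) x j))\<^sup>2))"
proof -
  define M where "M = 1\<^sub>m r + A * cmat L * mat_adjoint A"
  have M: "M \<in> carrier_mat r r"
    unfolding M_def by (rule objective_matrix_carrier[OF A L(1)])
  define w where "w = mat_app (mat_adjoint A) x"
  have w: "w j = (\<Sum>l=0..<r. cnj (A $$ (l,j)) * x l)" if "j < t" for j
    unfolding w_def mat_app_def using that A mat_adjoint_carrier[OF A] by (simp add: mat_adjoint_index)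
  have app: "mat_app M x i = x i + (\<Sum>j=0..<t. of_real (L $$ (j,j)) * A $$ (i,j) * w j)" if i: "i < r" for i
  proof -
    have "mat_app M x i = (\<Sum>l=0..<r. (if i = l then 1 else 0) * x l)
        + (\<Sum>l=0..<r. \<Sum>j=0..<t. of_real (L $$ (j,j)) * A $$ (i,j) * cnj (A $$ (l,j)) * x l)"
      unfolding mat_app_def sum.distrib[symmetric] using M i carrier_matD(2)[OF M]
      by (intro sum.cong) (simp_all add: M_def objective_matrix_index[OF A L] distrib_right sum_distrib_right)
    also have "(\<Sum>l=0..<r. (if i = l then 1 else 0) * x l) = x i"
      using i by (simp add: if_distrib[of "\<lambda>y. y * _"] cong: if_cong)
    also have "(\<Sum>l=0..<r. \<Sum>j=0..<t. of_real (L $$ (j,j)) * A $$ (i,j) * cnj (A $$ (l,j)) * x l)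
        = (\<Sum>j=0..<t. of_real (L $$ (j,j)) * A $$ (i,j) * w j)"
      by (subst sum.swap) (simp add: w sum_distrib_left mult.assoc)
    finally show ?thesis .
  qed
  have cnj_w: "cnj (w j) = (\<Sum>i=0..<r. cnj (x i) * A $$ (i,j))" if "j < t" for j
    using that by (simp add: w mult.commute)
  have "qform M x = (\<Sum>i=0..<r. cnj (x i) * x i)
      + (\<Sum>i=0..<r. \<Sum>j=0..<t. of_real (L $$ (j,j)) * (cnj (x i) * A $$ (i,j)) * w j)"
    unfolding qform_def using M by (simp add: app distrib_left sum.distrib sum_distrib_left ac_simps)
  also have "(\<Sum>i=0..<r. \<Sum>j=0..<t. of_real (L $$ (j,j)) * (cnj (x i) * A $$ (i,j)) * w j)
      = (\<Sum>j=0..<t. of_real (L $$ (j,j)) * (cnj (w j) * w j))"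
    by (subst sum.swap) (simp add: cnj_w sum_distrib_left sum_distrib_right ac_simps)
  finally show ?thesis
    unfolding M_def sqnorm_def sum_cnj_mult_self w_def[symmetric]
    by (simp add: complex_norm_square mult.commute del: of_real_power)
qed

lemma scaled_cmod_add_sq_le:
  fixes x w :: complex and lam d :: real
  assumes lam: "lam \<ge> 0" and "lam * d \<noteq> 0"
  shows "(lam * d)\<^sup>2 / (1 + lam * d\<^sup>2) * (cmod (of_real (1 / (lam * d)) * x + w))\<^sup>2
    \<le> (cmod x)\<^sup>2 + lam * (cmod w)\<^sup>2"
proof -
  define P Q e where "P = cmod x" and "Q = cmod w" and "e = \<bar>d\<bar>"
  have "(lam * d)\<^sup>2 * (cmod (of_real (1 / (lam * d)) * x + w))\<^sup>2 = (cmod (x + of_real (lam * d) * w))\<^sup>2"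
  proof -
    have "of_real (1 / (lam * d)) * x + w = of_real (1 / (lam * d)) * (x + of_real (lam * d) * w)"
      using assms(2) by (simp add: field_simps)
    thus ?thesis
      using assms(2) by (simp add: norm_mult norm_divide power_mult_distrib power_divide)
  qed
  also have "\<dots> \<le> (P + lam * e * Q)\<^sup>2"
    unfolding P_def Q_def e_def using lam
    by (intro power_mono order.trans[OF norm_triangle_ineq]) (auto simp: norm_mult abs_mult)
  also have "\<dots> = (1 + lam * e\<^sup>2) * (P\<^sup>2 + lam * Q\<^sup>2) - lam * (e * P - Q)\<^sup>2"
    by (simp add: power2_eq_square algebra_simps)
  also have "\<dots> \<le> (1 + lam * d\<^sup>2) * (P\<^sup>2 + lam * Q\<^sup>2)"
    using lam by (simp add: e_def)
  finally show ?thesis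
    using lam by (simp add: P_def Q_def field_simps add_pos_nonneg)
qed

(* The matrix X of the proof idea before row i in S is scaled by mu_i; there g_i = 1 / (lambda_i d_i). *)
definition adjoint_rows_mat :: "nat set \<Rightarrow> (nat \<Rightarrow> real) \<Rightarrow> complex mat \<Rightarrow> complex mat" where
  "adjoint_rows_mat S g A = mat (dim_row A) (dim_row A) (\<lambda>(i,l).
     (if i = l then (if i \<in> S then of_real (g i) else 1) else 0) + (if i \<in> S then cnj (A $$ (l,i)) else 0))"

lemma adjoint_rows_mat_carrier: "A \<in> carrier_mat r t \<Longrightarrow> adjoint_rows_mat S g A \<in> carrier_mat r r"
  by (simp add: adjoint_rows_mat_def)

lemma mat_app_adjoint_rows_mat:
  assumes A: "A \<in> carrier_mat r t" and "S \<subseteq> {..<t}" and "i < r"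
  shows "mat_app (adjoint_rows_mat S g A) x i
    = (if i \<in> S then of_real (g i) * x i + mat_app (mat_adjoint A) x i else x i)"
  using assms mat_adjoint_carrier[OF A]
  by (auto simp: mat_app_def adjoint_rows_mat_def mat_adjoint_index distrib_right sum.distrib
      if_distrib[of "\<lambda>y. y * _"] cong: if_cong)

lemma sq_cmod_mat_app_adjoint_rows_mat_le:
  fixes A :: "complex mat" and L :: "real mat" and d :: "nat \<Rightarrow> real"
  assumes A: "A \<in> carrier_mat r t" and S: "S \<subseteq> {..<t}" and "i < r"
    and L: "i \<in> S \<Longrightarrow> L $$ (i,i) \<ge> 0" and nz: "i \<in> S \<Longrightarrow> L $$ (i,i) * d i \<noteq> 0"
  shows "(if i \<in> S then (L $$ (i,i) * d i)\<^sup>2 / (1 + L $$ (i,i) * (d i)\<^sup>2) else 1)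
      * (cmod (mat_app (adjoint_rows_mat S (\<lambda>i. 1 / (L $$ (i,i) * d i)) A) x i))\<^sup>2
    \<le> (cmod (x i))\<^sup>2 + (if i \<in> S then L $$ (i,i) * (cmod (mat_app (mat_adjoint A) x i))\<^sup>2 else 0)"
proof (cases "i \<in> S")
  case True
  thus ?thesis
    unfolding mat_app_adjoint_rows_mat[OF A S \<open>i < r\<close>] using L nz
    by (simp only: True if_True) (rule scaled_cmod_add_sq_le)
qed (simp add: mat_app_adjoint_rows_mat[OF A S \<open>i < r\<close>])

lemma Re_det_objective_matrix_ge:
  fixes A :: "complex mat" and L :: "real mat" and d :: "nat \<Rightarrow> real"
  assumes A: "A \<in> carrier_mat r t"
    and L: "L \<in> carrier_mat t t" "rect_diagonal L" "\<And>j. j < t \<Longrightarrow> L $$ (j,j) \<ge> 0"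
    and S: "S \<subseteq> {..<min r t}" and nz: "\<And>i. i \<in> S \<Longrightarrow> L $$ (i,i) * d i \<noteq> 0"
  shows "(\<Prod>i\<in>S. (L $$ (i,i) * d i)\<^sup>2 / (1 + L $$ (i,i) * (d i)\<^sup>2))
      * (cmod (det (adjoint_rows_mat S (\<lambda>i. 1 / (L $$ (i,i) * d i)) A)))\<^sup>2
    \<le> Re (det (1\<^sub>m r + A * cmat L * mat_adjoint A))"
proof -
  define c where "c i = (if i \<in> S then (L $$ (i,i) * d i)\<^sup>2 / (1 + L $$ (i,i) * (d i)\<^sup>2) else 1)" for i
  have c: "c i \<ge> 0" for i
    unfolding c_def using L(3) S by (auto intro!: divide_nonneg_pos add_pos_nonneg)
  define Y where "Y = adjoint_rows_mat S (\<lambda>i. 1 / (L $$ (i,i) * d i)) A"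
  have Y: "Y \<in> carrier_mat r r"
    unfolding Y_def by (rule adjoint_rows_mat_carrier[OF A])
  define w where "w x = mat_app (mat_adjoint A) x" for x
  have "(\<Prod>i=0..<r. c i) * (cmod (det Y))\<^sup>2 \<le> Re (det (1\<^sub>m r + A * cmat L * mat_adjoint A))"
  proof (rule Re_det_ge_prod_sq_cmod_det_if_qform_ge[OF objective_matrix_carrier[OF A L(1)] Y c])
    fix x
    show "qform (1\<^sub>m r + A * cmat L * mat_adjoint A) x
        = of_real (sqnorm r x + (\<Sum>j=0..<t. L $$ (j,j) * (cmod (w x j))\<^sup>2))"
      unfolding w_def by (rule qform_objective_matrix[OF A L(1,2)])
    show "sqnorm r x \<le> sqnorm r x + (\<Sum>j=0..<t. L $$ (j,j) * (cmod (w x j))\<^sup>2)"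
      using L(3) by (auto intro!: sum_nonneg)
    have "c i * (cmod (mat_app Y x i))\<^sup>2 \<le> (cmod (x i))\<^sup>2 + (if i \<in> S then L $$ (i,i) * (cmod (w x i))\<^sup>2 else 0)"
      if "i < r" for i
      unfolding c_def Y_def w_def using S L(3) nz
      by (intro sq_cmod_mat_app_adjoint_rows_mat_le[OF A _ that]) auto
    hence "(\<Sum>i=0..<r. c i * (cmod (mat_app Y x i))\<^sup>2)
        \<le> sqnorm r x + (\<Sum>i=0..<r. if i \<in> S then L $$ (i,i) * (cmod (w x i))\<^sup>2 else 0)"
      unfolding sqnorm_def sum.distrib[symmetric] by (intro sum_mono) simp
    also have "(\<Sum>i=0..<r. if i \<in> S then L $$ (i,i) * (cmod (w x i))\<^sup>2 else 0)
        \<le> (\<Sum>j=0..<t. L $$ (j,j) * (cmod (w x j))\<^sup>2)"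
      using S L(3) by (simp add: sum.If_cases) (intro sum_mono2, auto)
    finally show "(\<Sum>i=0..<r. c i * (cmod (mat_app Y x i))\<^sup>2)
        \<le> sqnorm r x + (\<Sum>j=0..<t. L $$ (j,j) * (cmod (w x j))\<^sup>2)"
      by simp
  qed
  moreover have "(\<Prod>i=0..<r. c i) = (\<Prod>i\<in>S. (L $$ (i,i) * d i)\<^sup>2 / (1 + L $$ (i,i) * (d i)\<^sup>2))"
    using S unfolding c_def by (simp add: prod.If_cases Int_absorb1 subset_iff)
  ultimately show ?thesis
    unfolding Y_def by simp
qed

lemma cmod_det_adjoint_rows_mat_ge:
  fixes \<Sigma> :: "real mat" and \<Delta> :: "complex mat" and g :: "nat \<Rightarrow> real"
  assumes \<Sigma>: "\<Sigma> \<in> carrier_mat r t" "rect_diagonal \<Sigma>"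
    and \<Delta>: "\<Delta> \<in> carrier_mat r t" "spectral_norm \<Delta> \<le> \<epsilon>"
    and S: "S \<subseteq> {..<min r t}" and g: "\<And>i. i \<in> S \<Longrightarrow> g i + \<Sigma> $$ (i,i) > \<epsilon>"
  shows "cmod (det (adjoint_rows_mat S g (cmat \<Sigma> + \<Delta>))) \<ge> (\<Prod>i\<in>S. g i + \<Sigma> $$ (i,i) - \<epsilon>)"
proof (rule cmod_det_ge_prod_adjoint_block[OF \<Delta> S])
  show A: "adjoint_rows_mat S g (cmat \<Sigma> + \<Delta>) \<in> carrier_mat r r"
    using \<Sigma>(1) \<Delta>(1) by (intro adjoint_rows_mat_carrier[of _ r t]) (simp add: cmat_def)
  fix i l assume "i \<in> S" "l \<in> S"
  hence "i < r" "i < t" "l < r"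
    using S by auto
  thus "adjoint_rows_mat S g (cmat \<Sigma> + \<Delta>) $$ (i,l)
      = (if i = l then of_real (g i + \<Sigma> $$ (i,i)) else 0) + cnj (\<Delta> $$ (l,i))"
    using \<Sigma> \<Delta>(1) \<open>i \<in> S\<close> by (auto simp: adjoint_rows_mat_def cmat_def rect_diagonal_def)
qed (use \<Sigma>(1) \<Delta>(1) g in \<open>auto simp: adjoint_rows_mat_def cmat_def\<close>)

lemma scaled_sq_add_inverse_eq:
  fixes a b :: real
  assumes "a * b \<noteq> 0" and "1 + a * b\<^sup>2 \<noteq> 0"
  shows "(a * b)\<^sup>2 / (1 + a * b\<^sup>2) * (1 / (a * b) + b)\<^sup>2 = 1 + a * b\<^sup>2"
proof -
  have "1 / (a * b) + b = (1 + a * b\<^sup>2) / (a * b)"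
    using assms(1) by (simp add: field_simps power2_eq_square)
  thus ?thesis
    using assms by (simp add: power_divide power2_eq_square)
qed

lemma prod_max_sq_eq_prod_active:
  fixes lam s :: "nat \<Rightarrow> real"
  assumes "\<And>i. i < n \<Longrightarrow> lam i \<ge> 0"
  shows "(\<Prod>i=0..<n. 1 + lam i * (max (s i - \<epsilon>) 0)\<^sup>2)
    = (\<Prod>i\<in>{i. i < n \<and> lam i > 0 \<and> s i > \<epsilon>}. 1 + lam i * (s i - \<epsilon>)\<^sup>2)"
proof -
  have "(\<Prod>i=0..<n. 1 + lam i * (max (s i - \<epsilon>) 0)\<^sup>2)
      = (\<Prod>i\<in>{i. i < n \<and> lam i > 0 \<and> s i > \<epsilon>}. 1 + lam i * (max (s i - \<epsilon>) 0)\<^sup>2)"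
  proof (rule prod.mono_neutral_right)
    show "\<forall>i\<in>{0..<n} - {i. i < n \<and> lam i > 0 \<and> s i > \<epsilon>}. 1 + lam i * (max (s i - \<epsilon>) 0)\<^sup>2 = 1"
    proof
      fix i assume "i \<in> {0..<n} - {i. i < n \<and> lam i > 0 \<and> s i > \<epsilon>}"
      hence "lam i = 0 \<or> s i \<le> \<epsilon>"
        using assms[of i] by force
      thus "1 + lam i * (max (s i - \<epsilon>) 0)\<^sup>2 = 1"
        by auto
    qed
  qed auto
  thus ?thesis
    by simp
qed

lemma objective_lower_bound:
  fixes \<Sigma> \<Lambda> :: "real mat" and \<Delta> :: "complex mat"
  assumes \<Sigma>: "\<Sigma> \<in> carrier_mat r t" "rect_diagonal \<Sigma>"
    and \<Lambda>: "\<Lambda> \<in> carrier_mat t t" "rect_diagonal \<Lambda>" "\<And>j. j < t \<Longrightarrow> \<Lambda> $$ (j,j) \<ge> 0"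
    and \<Delta>: "\<Delta> \<in> carrier_mat r t" "spectral_norm \<Delta> \<le> \<epsilon>"
  shows "(\<Prod>i=0..<min r t. 1 + \<Lambda> $$ (i,i) * (max (\<Sigma> $$ (i,i) - \<epsilon>) 0)\<^sup>2) \<le> Re (objective r \<Sigma> \<Lambda> \<Delta>)"
proof -
  define S where "S = {i. i < min r t \<and> \<Lambda> $$ (i,i) > 0 \<and> \<Sigma> $$ (i,i) > \<epsilon>}"
  define d where "d i = \<Sigma> $$ (i,i) - \<epsilon>" for i
  define g where "g i = 1 / (\<Lambda> $$ (i,i) * d i)" for i
  define c where "c i = (\<Lambda> $$ (i,i) * d i)\<^sup>2 / (1 + \<Lambda> $$ (i,i) * (d i)\<^sup>2)" for i
  define Y where "Y = adjoint_rows_mat S g (cmat \<Sigma> + \<Delta>)"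
  have S: "S \<subseteq> {..<min r t}"
    unfolding S_def by auto
  have pos: "\<Lambda> $$ (i,i) > 0" "d i > 0" if "i \<in> S" for i
    using that unfolding S_def d_def by auto
  have nz: "\<Lambda> $$ (i,i) * d i \<noteq> 0" "1 + \<Lambda> $$ (i,i) * (d i)\<^sup>2 \<noteq> 0" if "i \<in> S" for i
    using pos[OF that] by (simp_all add: add_pos_pos order.strict_implies_not_eq[symmetric])
  have gd: "g i + d i > 0" "c i \<ge> 0" if "i \<in> S" for i
    using pos[OF that] unfolding g_def c_def by (auto intro!: divide_nonneg_pos add_pos_pos)
  have "(\<Prod>i\<in>S. g i + \<Sigma> $$ (i,i) - \<epsilon>) \<le> cmod (det Y)"
  proof (unfold Y_def, rule cmod_det_adjoint_rows_mat_ge[OF \<Sigma> \<Delta> S])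
    fix i assume "i \<in> S"
    thus "g i + \<Sigma> $$ (i,i) > \<epsilon>"
      using gd(1)[of i] unfolding d_def by simp
  qed
  hence "(\<Prod>i\<in>S. g i + d i) \<le> cmod (det Y)"
    unfolding d_def by (simp add: add_diff_eq)
  hence "(\<Prod>i\<in>S. c i) * (\<Prod>i\<in>S. g i + d i)\<^sup>2 \<le> (\<Prod>i\<in>S. c i) * (cmod (det Y))\<^sup>2"
    using gd by (intro mult_left_mono power_mono prod_nonneg) (auto simp: less_imp_le)
  also have "\<dots> \<le> Re (objective r \<Sigma> \<Lambda> \<Delta>)"
    unfolding objective_def Y_def c_def g_def using \<Sigma>(1) \<Delta>(1) nz(1)
    by (intro Re_det_objective_matrix_ge[OF _ \<Lambda> S]) (auto simp: cmat_def)
  also have "(\<Prod>i\<in>S. c i) * (\<Prod>i\<in>S. g i + d i)\<^sup>2 = (\<Prod>i\<in>S. 1 + \<Lambda> $$ (i,i) * (d i)\<^sup>2)"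
    unfolding prod_power_distrib prod.distrib[symmetric] c_def g_def
    by (intro prod.cong refl scaled_sq_add_inverse_eq nz)
  finally show ?thesis
    using prod_max_sq_eq_prod_active[of "min r t" "\<lambda>i. \<Lambda> $$ (i,i)" "\<lambda>i. \<Sigma> $$ (i,i)" \<epsilon>] \<Lambda>(3)
    unfolding S_def d_def by simp
qed

lemma det_objective_matrix_rect_diagonal:
  fixes A :: "complex mat" and L :: "real mat"
  assumes A: "A \<in> carrier_mat r t" "rect_diagonal A" and L: "L \<in> carrier_mat t t" "rect_diagonal L"
  shows "det (1\<^sub>m r + A * cmat L * mat_adjoint A)
    = of_real (\<Prod>i=0..<min r t. 1 + L $$ (i,i) * (cmod (A $$ (i,i)))\<^sup>2)"
proof -
  define f :: "nat \<Rightarrow> complex" where "f i = (if i < t then 1 + of_real (L $$ (i,i) * (cmod (A $$ (i,i)))\<^sup>2) else 1)" for i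
  have "1\<^sub>m r + A * cmat L * mat_adjoint A = mat_diag r f"
  proof (rule eq_matI)
    fix i l assume "i < dim_row (mat_diag r f)" "l < dim_col (mat_diag r f)"
    hence il: "i < r" "l < r" by (auto simp: mat_diag_def)
    have "(\<Sum>j=0..<t. of_real (L $$ (j,j)) * A $$ (i,j) * cnj (A $$ (l,j)))
        = (\<Sum>j=0..<t. if j = i \<and> j = l then of_real (L $$ (i,i) * (cmod (A $$ (i,i)))\<^sup>2) else 0)"
      using A il unfolding rect_diagonal_def
      by (intro sum.cong) (auto simp: complex_norm_square simp del: of_real_power)
    thus "(1\<^sub>m r + A * cmat L * mat_adjoint A) $$ (i,l) = mat_diag r f $$ (i,l)"
      using il by (simp add: objective_matrix_index[OF A(1) L] mat_diag_def f_def)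
  qed (use objective_matrix_carrier[OF A(1) L(1)] in \<open>auto simp: mat_diag_def\<close>)
  hence "det (1\<^sub>m r + A * cmat L * mat_adjoint A) = (\<Prod>i=0..<r. f i)"
    by (simp add: det_mat_diag)
  also have "\<dots> = (\<Prod>i=0..<min r t. f i)"
    by (rule prod.mono_neutral_right) (auto simp: f_def)
  finally show ?thesis
    by (simp add: f_def)
qed

theorem lemma1:
  fixes r t :: nat and \<epsilon> :: real and \<Sigma> \<Lambda> :: "real mat"
  assumes "r \<ge> 1" and "t \<ge> 1" and "\<epsilon> \<ge> 0"
    and "\<Sigma> \<in> carrier_mat r t" and "rect_diagonal \<Sigma>"
    and "\<forall>i < min r t. \<Sigma> $$ (i,i) \<ge> 0"
    and "\<Lambda> \<in> carrier_mat t t" and "rect_diagonal \<Lambda>"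
    and "\<forall>i < t. \<Lambda> $$ (i,i) \<ge> 0"
  shows "\<exists>\<Delta> \<in> carrier_mat r t. rect_diagonal \<Delta> \<and> spectral_norm \<Delta> \<le> \<epsilon> \<and>
           (\<forall>\<Delta>' \<in> carrier_mat r t. spectral_norm \<Delta>' \<le> \<epsilon> \<longrightarrow>
              Re (objective r \<Sigma> \<Lambda> \<Delta>) \<le> Re (objective r \<Sigma> \<Lambda> \<Delta>'))"
proof -
  note \<Sigma> = assms(4,5) and \<Lambda> = assms(7,8)
  define \<Delta> :: "complex mat"
    where "\<Delta> = mat r t (\<lambda>(i,j). if i = j then - of_real (min (\<Sigma> $$ (i,i)) \<epsilon>) else 0)"
  have \<Delta>: "\<Delta> \<in> carrier_mat r t" "rect_diagonal \<Delta>"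
    unfolding \<Delta>_def rect_diagonal_def by auto
  have "spectral_norm \<Delta> \<le> \<epsilon>"
    using assms(3,6) by (intro spectral_norm_rect_diagonal_le[OF \<Delta>]) (auto simp: \<Delta>_def)
  moreover have "Re (objective r \<Sigma> \<Lambda> \<Delta>)
      = (\<Prod>i=0..<min r t. 1 + \<Lambda> $$ (i,i) * (max (\<Sigma> $$ (i,i) - \<epsilon>) 0)\<^sup>2)"
  proof -
    have "cmat \<Sigma> + \<Delta> = mat r t (\<lambda>(i,j). if i = j then of_real (max (\<Sigma> $$ (i,i) - \<epsilon>) 0) else 0)"
      using \<Sigma> assms(3,6) unfolding \<Delta>_def
      by (intro eq_matI) (auto simp: cmat_def rect_diagonal_def simp flip: of_real_diff)
    thus ?thesis
      unfolding objective_def using \<Lambda>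
      by (subst det_objective_matrix_rect_diagonal) (auto simp: rect_diagonal_def simp del: of_real_prod)
  qed
  moreover have "Re (objective r \<Sigma> \<Lambda> \<Delta>) \<le> Re (objective r \<Sigma> \<Lambda> \<Delta>')"
    if "\<Delta>' \<in> carrier_mat r t" "spectral_norm \<Delta>' \<le> \<epsilon>" for \<Delta>'
    using objective_lower_bound[OF \<Sigma> \<Lambda> _ that] assms(9) \<open>Re (objective r \<Sigma> \<Lambda> \<Delta>) = _\<close> by simp
  ultimately show ?thesis
    using \<Delta> by blast
qed

end
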